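(* Let $\mathcal{X}$ and $\mathcal{Z}$ be compact Hausdorff spaces equipped with their Borel $\sigma$-algebras, let $f\colon\mathcal{X}\to\mathcal{Z}$ be continuous, and let $k_x$, $k_z$ be continuous (bounded, positive definite) kernels on $\mathcal{X}$ and $\mathcal{Z}$ respectively, with $k_x$ $c_0$-universal. Let $X$ be a random variable on $\mathcal{X}$ with distribution $P$. For each $n\in\mathbb{N}$ let $\hat X_n=\{(x_i,w_i)\}_{i=1}^n$ be a weighted sample with $x_i\in\mathcal{X}$, $w_i\in\mathbb{R}$ (both possibly depending on $n$), and assume there is a constant $C$ independent of $n$ with $\sum_{i=1}^n |w_i|\le C$ for all $n$. Then \[ \text{if}\quad \Big\|\hat\mu^{k_x}_{X}-\mu^{k_x}_{X}\Big\|_{\mathcal{H}_{k_x}}\to 0 \quad\text{then}\quad \Big\|\hat\mu^{k_z}_{f(X)}-\mu^{k_z}_{f(X)}\Big\|_{\mathcal{H}_{k_z}}\to 0 \qquad (n\to\infty). \]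
   Context: For a kernel $k$ on a space $\mathcal{X}$ with RKHS $\mathcal{H}_k$, the kernel mean embedding of $X\sim P$ is $\mu^k_X:=\int k(x,\cdot)\,dP(x)\in\mathcal{H}_k$ and the estimator from the weighted sample is $\hat\mu^k_X:=\sum_{i=1}^n w_i k(x_i,\cdot)$. For $f\colon\mathcal{X}\to\mathcal{Z}$ and a kernel $k_z$ on $\mathcal{Z}$: $\mu^{k_z}_{f(X)}:=\int k_z(f(x),\cdot)\,dP(x)$ and $\hat\mu^{k_z}_{f(X)}:=\sum_{i=1}^n w_i k_z(f(x_i),\cdot)$. A kernel $k$ on a locally compact Hausdorff space is $c_0$-universal if its RKHS is contained in and dense in $C_0(\mathcal{X})$ (continuous functions vanishing at infinity, with the sup norm); on a compact space this means density in $C(\mathcal{X})$. *)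

theory Defs
  imports "HOL-Probability.Probability"
begin

definition pos_def_kernel :: "('a \<Rightarrow> 'a \<Rightarrow> real) \<Rightarrow> bool" where
  "pos_def_kernel k \<longleftrightarrow> (\<forall>x y. k x y = k y x) \<and>
     (\<forall>(n::nat) (c::nat \<Rightarrow> real) (p::nat \<Rightarrow> 'a).
        0 \<le> (\<Sum>i<n. \<Sum>j<n. c i * c j * k (p i) (p j)))"

definition is_RKHS ::
  "('a \<Rightarrow> 'a \<Rightarrow> real) \<Rightarrow> ('a \<Rightarrow> real) set \<Rightarrow> (('a \<Rightarrow> real) \<Rightarrow> ('a \<Rightarrow> real) \<Rightarrow> real) \<Rightarrow> bool" where
  "is_RKHS k H ip \<longleftrightarrow>
     (\<lambda>_. 0) \<in> H \<and>
     (\<forall>g\<in>H. \<forall>h\<in>H. (\<lambda>y. g y + h y) \<in> H) \<and>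
     (\<forall>c. \<forall>g\<in>H. (\<lambda>y. c * g y) \<in> H) \<and>
     (\<forall>g\<in>H. \<forall>h\<in>H. ip g h = ip h g) \<and>
     (\<forall>g\<in>H. \<forall>h\<in>H. \<forall>u\<in>H. ip (\<lambda>y. g y + h y) u = ip g u + ip h u) \<and>
     (\<forall>c. \<forall>g\<in>H. \<forall>h\<in>H. ip (\<lambda>y. c * g y) h = c * ip g h) \<and>
     (\<forall>g\<in>H. 0 \<le> ip g g \<and> (ip g g = 0 \<longrightarrow> g = (\<lambda>_. 0))) \<and>
     (\<forall>s. (\<forall>n. s n \<in> H) \<and>
          (\<forall>e>0. \<exists>N. \<forall>m\<ge>N. \<forall>n\<ge>N.
              sqrt (ip (\<lambda>y. s m y - s n y) (\<lambda>y. s m y - s n y)) < e)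
          \<longrightarrow> (\<exists>g\<in>H. (\<lambda>n. sqrt (ip (\<lambda>y. s n y - g y) (\<lambda>y. s n y - g y)))
                         \<longlonglongrightarrow> 0)) \<and>
     (\<forall>x. k x \<in> H) \<and>
     (\<forall>g\<in>H. \<forall>x. ip g (k x) = g x)"

definition rkhs_norm :: "(('a \<Rightarrow> real) \<Rightarrow> ('a \<Rightarrow> real) \<Rightarrow> real) \<Rightarrow> ('a \<Rightarrow> real) \<Rightarrow> real" where
  "rkhs_norm ip g = sqrt (ip g g)"

definition C0_functions :: "('a::topological_space \<Rightarrow> real) set" where
  "C0_functions = {g. continuous_on UNIV g \<and>
     (\<forall>e>0. \<exists>K. compact K \<and> (\<forall>x. x \<notin> K \<longrightarrow> \<bar>g x\<bar> < e))}"

definition c0_universal :: "('a::topological_space \<Rightarrow> real) set \<Rightarrow> bool" where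
  "c0_universal H \<longleftrightarrow> H \<subseteq> C0_functions \<and>
     (\<forall>g\<in>C0_functions. \<forall>e>0. \<exists>h\<in>H. \<forall>x. \<bar>g x - h x\<bar> < e)"

text \<open>Kernel mean embedding of f(X), X ~ P (as a function, i.e. evaluated pointwise):
  mu(z) = integral of k(f x, z) dP(x).  With f = id this is mu^k_X.\<close>
definition kme :: "('b \<Rightarrow> 'b \<Rightarrow> real) \<Rightarrow> ('a \<Rightarrow> 'b) \<Rightarrow> 'a measure \<Rightarrow> 'b \<Rightarrow> real" where
  "kme k f P = (\<lambda>z. \<integral>x. k (f x) z \<partial>P)"

definition kme_est :: "('b \<Rightarrow> 'b \<Rightarrow> real) \<Rightarrow> ('a \<Rightarrow> 'b) \<Rightarrow> (nat \<Rightarrow> 'a) \<Rightarrow> (nat \<Rightarrow> real) \<Rightarrow> nat \<Rightarrow> 'b \<Rightarrow> real" where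
  "kme_est k f x w n = (\<lambda>z. \<Sum>i=1..n. w i * k (f (x i)) z)"

end

theory Submission
  imports Defs
begin

text \<open>
  Put \<open>L\<^sub>n g = \<Sum>\<^sub>i w\<^sub>i g(x\<^sub>i) - \<integral> g dP\<close>. For \<open>h \<in> H\<^sub>x\<close>, \<open>L\<^sub>n h\<close> is the inner product of \<open>h\<close>
  with the estimation error of the mean embedding, so \<open>L\<^sub>n h \<longlongrightarrow> 0\<close>. Since \<open>H\<^sub>x\<close> is uniformly
  dense in \<open>C(X)\<close> and \<open>|L\<^sub>n g| \<le> (C + 1) sup |g|\<close>, in fact \<open>L\<^sub>n g \<longlongrightarrow> 0\<close> for every continuous \<open>g\<close>.

  For \<open>h \<in> H\<^sub>z\<close> the inner product of \<open>h\<close> with the error of the embedding of \<open>f(X)\<close> is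
  \<open>L\<^sub>n (h \<circ> f)\<close>, and \<open>a \<mapsto> k\<^sub>z(f a, -)\<close> is continuous into \<open>H\<^sub>z\<close>. Take a partition of unity
  \<open>(\<phi>\<^sub>c)\<close> such that this map moves by less than \<open>\<delta>\<close> on the support of each \<open>\<phi>\<^sub>c\<close>; then
  \<open>|L\<^sub>n (h \<circ> f) - \<Sum>\<^sub>c h(f c) L\<^sub>n \<phi>\<^sub>c| \<le> (C + 1) \<delta> \<parallel>h\<parallel>\<close>, so the error has norm at most
  \<open>(C + 1) \<delta> + \<Sum>\<^sub>c |L\<^sub>n \<phi>\<^sub>c| \<parallel>k\<^sub>z(f c, -)\<parallel>\<close>, and the finite sum tends to 0.
  The same partitions of unity, applied to \<open>\<integral> - dP\<close> alone, show that the mean embedding of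
  \<open>f(X)\<close> lies in \<open>H\<^sub>z\<close> and represents \<open>h \<mapsto> \<integral> h \<circ> f dP\<close>.
\<close>

lemma tendsto_zero_if_approximable:
  fixes a :: "nat \<Rightarrow> real"
  assumes "\<And>e. e > 0 \<Longrightarrow> \<exists>b. b \<longlonglongrightarrow> 0 \<and> (\<forall>n. \<bar>a n\<bar> \<le> \<bar>b n\<bar> + K * e)"
  shows "a \<longlonglongrightarrow> 0"
proof (rule LIMSEQ_I)
  fix r :: real
  assume "0 < r"
  define e where "e = r / (2 * (\<bar>K\<bar> + 1))"
  have "e > 0"
    using \<open>0 < r\<close> by (simp add: e_def)
  have "K * e \<le> (\<bar>K\<bar> + 1) * e"
    using \<open>e > 0\<close> by (intro mult_right_mono) auto
  also have "\<dots> = r / 2"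
    by (simp add: e_def field_simps add_pos_nonneg)
  finally have Ke: "K * e \<le> r / 2" .
  obtain b where "b \<longlonglongrightarrow> 0" and ab: "\<And>n. \<bar>a n\<bar> \<le> \<bar>b n\<bar> + K * e"
    using assms[OF \<open>e > 0\<close>] by blast
  then obtain N where N: "\<And>n. n \<ge> N \<Longrightarrow> \<bar>b n\<bar> < r / 2"
    using LIMSEQ_D[of b 0 "r / 2"] \<open>0 < r\<close> by auto
  have "norm (a n - 0) < r" if "n \<ge> N" for n
    using N[OF that] ab[of n] Ke by simp
  then show "\<exists>N. \<forall>n\<ge>N. norm (a n - 0) < r" by blast
qed

lemma integrable_continuous_compact:
  fixes g :: "'a::topological_space \<Rightarrow> real"
  assumes "compact (UNIV :: 'a set)" "continuous_on UNIV g"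
    and "finite_measure P" "sets P = sets borel"
  shows "integrable P g"
proof -
  obtain B where "\<And>a. \<bar>g a\<bar> \<le> B"
    using compact_imp_bounded[OF compact_continuous_image[OF assms(2,1)]]
    unfolding bounded_real by blast
  moreover have "g \<in> borel_measurable P"
    using measurable_cong_sets[OF assms(4) refl] borel_measurable_continuous_onI[OF assms(2)]
    by blast
  ultimately show ?thesis
    using assms(3) by (intro finite_measure.integrable_const_bound[where B = B]) auto
qed

definition weighted_sum :: "(nat \<Rightarrow> 'a) \<Rightarrow> (nat \<Rightarrow> real) \<Rightarrow> nat \<Rightarrow> ('a \<Rightarrow> real) \<Rightarrow> real" where
  "weighted_sum x w n g = (\<Sum>i=1..n. w i * g (x i))"

text \<open>
  Linearity is only required on continuous functions, since the Bochner integral of a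
  non-integrable function is a junk \<open>0\<close>.
\<close>
definition bounded_linear_on_C :: "(('a::topological_space \<Rightarrow> real) \<Rightarrow> real) \<Rightarrow> real \<Rightarrow> bool" where
  "bounded_linear_on_C L M \<longleftrightarrow>
     (\<forall>g h. continuous_on UNIV g \<longrightarrow> continuous_on UNIV h \<longrightarrow> L (\<lambda>a. g a + h a) = L g + L h) \<and>
     (\<forall>c g. continuous_on UNIV g \<longrightarrow> L (\<lambda>a. c * g a) = c * L g) \<and>
     (\<forall>g e. continuous_on UNIV g \<longrightarrow> (\<forall>a. \<bar>g a\<bar> \<le> e) \<longrightarrow> \<bar>L g\<bar> \<le> M * e)"

lemma bounded_linear_on_C_add:
  "bounded_linear_on_C L M \<Longrightarrow> continuous_on UNIV g \<Longrightarrow> continuous_on UNIV h \<Longrightarrow>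
    L (\<lambda>a. g a + h a) = L g + L h"
  unfolding bounded_linear_on_C_def by blast

lemma bounded_linear_on_C_scale:
  "bounded_linear_on_C L M \<Longrightarrow> continuous_on UNIV g \<Longrightarrow> L (\<lambda>a. c * g a) = c * L g"
  unfolding bounded_linear_on_C_def by blast

lemma bounded_linear_on_C_bound:
  "bounded_linear_on_C L M \<Longrightarrow> continuous_on UNIV g \<Longrightarrow> (\<And>a. \<bar>g a\<bar> \<le> e) \<Longrightarrow> \<bar>L g\<bar> \<le> M * e"
  unfolding bounded_linear_on_C_def by blast

lemma bounded_linear_on_C_diff:
  assumes "bounded_linear_on_C L M" "continuous_on UNIV g" "continuous_on UNIV h"
  shows "L (\<lambda>a. g a - h a) = L g - L h"
  using bounded_linear_on_C_add[OF assms(1,2) continuous_on_mult[OF continuous_on_const assms(3)],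
      of "-1"] bounded_linear_on_C_scale[OF assms(1,3), of "-1"]
  by simp

lemma bounded_linear_on_C_sum:
  assumes "bounded_linear_on_C L M" "finite A" "\<And>c. c \<in> A \<Longrightarrow> continuous_on UNIV (\<phi> c)"
  shows "L (\<lambda>a. \<Sum>c\<in>A. t c * \<phi> c a) = (\<Sum>c\<in>A. t c * L (\<phi> c))"
  using assms(2,3)
proof (induction A rule: finite_induct)
  case empty
  show ?case
    using bounded_linear_on_C_scale[OF assms(1) continuous_on_const, of 0 0] by simp
next
  case (insert c A)
  then have "L (\<lambda>a. t c * \<phi> c a + (\<Sum>c\<in>A. t c * \<phi> c a))
      = t c * L (\<phi> c) + L (\<lambda>a. \<Sum>c\<in>A. t c * \<phi> c a)"
    by (simp add: bounded_linear_on_C_add[OF assms(1)] bounded_linear_on_C_scale[OF assms(1)]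
        continuous_on_sum continuous_on_mult continuous_on_const)
  with insert show ?case by simp
qed

lemma bounded_linear_on_C_minus:
  assumes "bounded_linear_on_C L M" "bounded_linear_on_C L' M'"
  shows "bounded_linear_on_C (\<lambda>g. L g - L' g) (M + M')"
proof -
  have "\<bar>L g - L' g\<bar> \<le> (M + M') * e"
    if "continuous_on UNIV g" "\<And>a. \<bar>g a\<bar> \<le> e" for g e
    using bounded_linear_on_C_bound[OF assms(1) that] bounded_linear_on_C_bound[OF assms(2) that]
    by (simp add: distrib_right)
  then show ?thesis
    unfolding bounded_linear_on_C_def
    by (simp add: bounded_linear_on_C_add[OF assms(1)] bounded_linear_on_C_add[OF assms(2)]
        bounded_linear_on_C_scale[OF assms(1)] bounded_linear_on_C_scale[OF assms(2)] algebra_simps)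
qed

lemma bounded_linear_on_C_weighted_sum:
  assumes "(\<Sum>i=1..n. \<bar>w i\<bar>) \<le> C"
  shows "bounded_linear_on_C (weighted_sum x w n) C"
proof -
  have "\<bar>weighted_sum x w n g\<bar> \<le> C * e" if "\<And>a. \<bar>g a\<bar> \<le> e" for g :: "'a \<Rightarrow> real" and e
  proof -
    have "\<bar>weighted_sum x w n g\<bar> \<le> (\<Sum>i=1..n. \<bar>w i\<bar> * e)"
      unfolding weighted_sum_def
      by (rule order_trans[OF sum_abs sum_mono]) (simp add: abs_mult mult_left_mono that)
    also have "\<dots> \<le> C * e"
      using assms that[of undefined] by (simp add: sum_distrib_right[symmetric] mult_right_mono)
    finally show ?thesis .
  qed
  moreover have "weighted_sum x w n (\<lambda>a. g a + h a) = weighted_sum x w n g + weighted_sum x w n h"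
    for g h :: "'a \<Rightarrow> real"
    by (simp add: weighted_sum_def sum.distrib algebra_simps)
  moreover have "weighted_sum x w n (\<lambda>a. c * g a) = c * weighted_sum x w n g" for c g
    by (simp add: weighted_sum_def sum_distrib_left algebra_simps)
  ultimately show ?thesis
    unfolding bounded_linear_on_C_def by blast
qed

lemma bounded_linear_on_C_integral:
  fixes P :: "'a::topological_space measure"
  assumes "compact (UNIV :: 'a set)" "prob_space P" "sets P = sets borel"
  shows "bounded_linear_on_C (\<lambda>g. \<integral>a. g a \<partial>P) 1"
proof -
  interpret prob_space P by fact
  have int: "integrable P g" if "continuous_on UNIV g" for g :: "'a \<Rightarrow> real"
    using integrable_continuous_compact[OF assms(1) that finite_measure_axioms assms(3)] .
  have "\<bar>\<integral>a. g a \<partial>P\<bar> \<le> e" if "continuous_on UNIV g" "\<And>a. \<bar>g a\<bar> \<le> e"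
    for g :: "'a \<Rightarrow> real" and e
  proof -
    have "- e \<le> g a" "g a \<le> e" for a
      using that(2)[of a] by auto
    then have "- e \<le> (\<integral>a. g a \<partial>P)" "(\<integral>a. g a \<partial>P) \<le> e"
      by (auto intro!: integral_ge_const integral_le_const int that(1) AE_I2)
    then show ?thesis by simp
  qed
  moreover have "(\<integral>a. g a + h a \<partial>P) = (\<integral>a. g a \<partial>P) + (\<integral>a. h a \<partial>P)"
    if "continuous_on UNIV g" "continuous_on UNIV h" for g h :: "'a \<Rightarrow> real"
    using int[OF that(1)] int[OF that(2)] by simp
  ultimately show ?thesis
    unfolding bounded_linear_on_C_def by simp
qed

definition partition_of_unity ::
  "('a::topological_space \<Rightarrow> 'a \<Rightarrow> real) \<Rightarrow> real \<Rightarrow> 'a set \<Rightarrow> ('a \<Rightarrow> 'a \<Rightarrow> real) \<Rightarrow> bool" where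
  "partition_of_unity D \<delta> A \<phi> \<longleftrightarrow> finite A \<and> (\<forall>c\<in>A. continuous_on UNIV (\<phi> c)) \<and>
     (\<forall>c a. 0 \<le> \<phi> c a) \<and> (\<forall>a. (\<Sum>c\<in>A. \<phi> c a) = 1) \<and> (\<forall>c a. 0 < \<phi> c a \<longrightarrow> D c a < \<delta>)"

lemma partition_of_unity_exists:
  fixes D :: "'a::topological_space \<Rightarrow> 'a \<Rightarrow> real"
  assumes "compact (UNIV :: 'a set)" "\<And>c. continuous_on UNIV (D c)" "\<And>c. D c c = 0" "\<delta> > 0"
  shows "\<exists>A \<phi>. partition_of_unity D \<delta> A \<phi>"
proof -
  have "open {a. D c a < \<delta>}" for c
    by (rule open_Collect_less) (auto intro: assms(2) continuous_on_const)
  moreover have "UNIV \<subseteq> (\<Union>c\<in>UNIV. {a. D c a < \<delta>})"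
    using assms(3,4) by auto
  ultimately obtain A where A: "finite A" "UNIV \<subseteq> (\<Union>c\<in>A. {a. D c a < \<delta>})"
    by (rule compactE_image[OF assms(1)]) auto
  define bump where "bump c a = max 0 (\<delta> - D c a)" for c a
  define S where "S a = (\<Sum>c\<in>A. bump c a)" for a
  have S_pos: "S a > 0" for a
  proof -
    obtain c where "c \<in> A" "D c a < \<delta>" using A(2) by blast
    then have "0 < bump c a" by (simp add: bump_def)
    also have "\<dots> \<le> S a"
      unfolding S_def using \<open>c \<in> A\<close> A(1) by (intro member_le_sum) (auto simp: bump_def)
    finally show ?thesis .
  qed
  have cont_bump: "continuous_on UNIV (bump c)" for c
    unfolding bump_def by (intro continuous_on_max continuous_on_const continuous_on_diff assms(2))
  then have "continuous_on UNIV S"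
    unfolding S_def by (intro continuous_on_sum) auto
  moreover have "\<forall>a\<in>UNIV. S a \<noteq> 0"
    using S_pos by (simp add: less_imp_neq[symmetric])
  ultimately have "continuous_on UNIV (\<lambda>a. bump c a / S a)" for c
    by (intro continuous_on_divide cont_bump)
  moreover have "0 \<le> bump c a / S a" for c a
    using S_pos[of a] by (simp add: bump_def)
  moreover have "(\<Sum>c\<in>A. bump c a / S a) = 1" for a
    using S_pos[of a] by (simp add: S_def sum_divide_distrib[symmetric])
  moreover have "D c a < \<delta>" if "0 < bump c a / S a" for c a
    using that S_pos[of a] by (simp add: bump_def zero_less_divide_iff)
  ultimately have "partition_of_unity D \<delta> A (\<lambda>c a. bump c a / S a)"
    unfolding partition_of_unity_def using A(1) by blast
  then show ?thesis by blast
qed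

lemma partition_of_unity_approx:
  assumes "partition_of_unity D \<delta> A \<phi>" "0 \<le> B" "\<And>a c. \<bar>u a - u c\<bar> \<le> B * D c a"
  shows "\<bar>u a - (\<Sum>c\<in>A. u c * \<phi> c a)\<bar> \<le> B * \<delta>"
proof -
  have nonneg: "\<And>c. 0 \<le> \<phi> c a" and sum1: "(\<Sum>c\<in>A. \<phi> c a) = 1"
    and local: "\<And>c. 0 < \<phi> c a \<Longrightarrow> D c a < \<delta>"
    using assms(1) by (auto simp: partition_of_unity_def)
  have "\<bar>\<phi> c a * (u a - u c)\<bar> \<le> \<phi> c a * (B * \<delta>)" for c
  proof (cases "\<phi> c a = 0")
    case False
    with nonneg have "0 < \<phi> c a" by (simp add: order_less_le)
    then have "\<bar>u a - u c\<bar> \<le> B * \<delta>"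
      using local assms(2) assms(3)[of a c] mult_left_mono[of "D c a" \<delta> B] by force
    with \<open>0 < \<phi> c a\<close> show ?thesis by (simp add: abs_mult)
  qed simp
  then have "\<bar>\<Sum>c\<in>A. \<phi> c a * (u a - u c)\<bar> \<le> (\<Sum>c\<in>A. \<phi> c a * (B * \<delta>))"
    by (intro order_trans[OF sum_abs sum_mono])
  moreover have "(\<Sum>c\<in>A. \<phi> c a * (u a - u c)) = u a - (\<Sum>c\<in>A. u c * \<phi> c a)"
    using sum1 by (simp add: right_diff_distrib sum_subtractf sum_distrib_left[symmetric] mult.commute)
  ultimately show ?thesis
    using sum1 by (simp add: sum_distrib_right[symmetric])
qed

lemma bounded_linear_on_C_partition_approx:
  assumes L: "bounded_linear_on_C L M" and pou: "partition_of_unity D \<delta> A \<phi>"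
    and "continuous_on UNIV u" "0 \<le> B" "\<And>a c. \<bar>u a - u c\<bar> \<le> B * D c a"
  shows "\<bar>L u - (\<Sum>c\<in>A. u c * L (\<phi> c))\<bar> \<le> M * (B * \<delta>)"
proof -
  have fin: "finite A" and cont: "\<And>c. c \<in> A \<Longrightarrow> continuous_on UNIV (\<phi> c)"
    using pou by (auto simp: partition_of_unity_def)
  then have "continuous_on UNIV (\<lambda>a. \<Sum>c\<in>A. u c * \<phi> c a)"
    by (intro continuous_on_sum continuous_on_mult continuous_on_const) auto
  then have "L u - (\<Sum>c\<in>A. u c * L (\<phi> c)) = L (\<lambda>a. u a - (\<Sum>c\<in>A. u c * \<phi> c a))"
    using bounded_linear_on_C_diff[OF L assms(3)] bounded_linear_on_C_sum[OF L fin cont] by simp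
  also have "\<bar>\<dots>\<bar> \<le> M * (B * \<delta>)"
    using assms(3-5) \<open>continuous_on UNIV (\<lambda>a. \<Sum>c\<in>A. u c * \<phi> c a)\<close>
    by (intro bounded_linear_on_C_bound[OF L] continuous_on_diff partition_of_unity_approx[OF pou])
  finally show ?thesis .
qed

lemma C0_functions_compact:
  "compact (UNIV :: 'a::topological_space set) \<Longrightarrow> C0_functions = {g :: 'a \<Rightarrow> real. continuous_on UNIV g}"
  unfolding C0_functions_def by auto

lemma weighted_sum_tendsto_integral_dense:
  fixes P :: "'a::topological_space measure" and S :: "('a \<Rightarrow> real) set"
  assumes "compact (UNIV :: 'a set)" "prob_space P" "sets P = sets borel"
    and w_bound: "\<And>n. (\<Sum>i=1..n. \<bar>w n i\<bar>) \<le> C"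
    and S_continuous: "\<And>h. h \<in> S \<Longrightarrow> continuous_on UNIV h"
    and S_tendsto: "\<And>h. h \<in> S \<Longrightarrow> (\<lambda>n. weighted_sum (x n) (w n) n h - (\<integral>a. h a \<partial>P)) \<longlonglongrightarrow> 0"
    and S_dense: "\<And>e. e > 0 \<Longrightarrow> \<exists>h\<in>S. \<forall>a. \<bar>g a - h a\<bar> < e"
    and g: "continuous_on UNIV g"
  shows "(\<lambda>n. weighted_sum (x n) (w n) n g - (\<integral>a. g a \<partial>P)) \<longlonglongrightarrow> 0"
proof (rule tendsto_zero_if_approximable[where K = "C + 1"])
  define L where "L n g = weighted_sum (x n) (w n) n g - (\<integral>a. g a \<partial>P)" for n g
  have L: "bounded_linear_on_C (L n) (C + 1)" for n
    unfolding L_def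
    by (intro bounded_linear_on_C_minus bounded_linear_on_C_weighted_sum bounded_linear_on_C_integral
        w_bound assms(1-3))
  fix e :: real
  assume "e > 0"
  then obtain h where "h \<in> S" and gh: "\<And>a. \<bar>g a - h a\<bar> < e"
    using S_dense by blast
  have "\<bar>L n g\<bar> \<le> \<bar>L n h\<bar> + (C + 1) * e" for n
  proof -
    have "L n g = L n h + L n (\<lambda>a. g a - h a)"
      using bounded_linear_on_C_diff[OF L g S_continuous[OF \<open>h \<in> S\<close>]] by simp
    moreover have "\<bar>L n (\<lambda>a. g a - h a)\<bar> \<le> (C + 1) * e"
      using gh by (intro bounded_linear_on_C_bound[OF L] continuous_on_diff g S_continuous
          \<open>h \<in> S\<close> less_imp_le)
    ultimately show ?thesis by linarith
  qed
  with S_tendsto[OF \<open>h \<in> S\<close>] show "\<exists>b. b \<longlonglongrightarrow> 0 \<and>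
      (\<forall>n. \<bar>weighted_sum (x n) (w n) n g - (\<integral>a. g a \<partial>P)\<bar> \<le> \<bar>b n\<bar> + (C + 1) * e)"
    unfolding L_def by blast
qed

locale rkhs =
  fixes k :: "'a \<Rightarrow> 'a \<Rightarrow> real" and H :: "('a \<Rightarrow> real) set"
    and ip :: "('a \<Rightarrow> real) \<Rightarrow> ('a \<Rightarrow> real) \<Rightarrow> real"
  assumes is_RKHS: "is_RKHS k H ip"
begin

lemma zero_mem: "(\<lambda>_. 0) \<in> H"
  using is_RKHS unfolding is_RKHS_def by blast

lemma add_mem: "g \<in> H \<Longrightarrow> h \<in> H \<Longrightarrow> (\<lambda>y. g y + h y) \<in> H"
  using is_RKHS unfolding is_RKHS_def by blast

lemma scale_mem: "g \<in> H \<Longrightarrow> (\<lambda>y. c * g y) \<in> H"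
  using is_RKHS unfolding is_RKHS_def by blast

lemma inner_commute: "g \<in> H \<Longrightarrow> h \<in> H \<Longrightarrow> ip g h = ip h g"
  using is_RKHS unfolding is_RKHS_def by blast

lemma inner_add_left: "g \<in> H \<Longrightarrow> h \<in> H \<Longrightarrow> u \<in> H \<Longrightarrow> ip (\<lambda>y. g y + h y) u = ip g u + ip h u"
  using is_RKHS unfolding is_RKHS_def by blast

lemma inner_scale_left: "g \<in> H \<Longrightarrow> h \<in> H \<Longrightarrow> ip (\<lambda>y. c * g y) h = c * ip g h"
  using is_RKHS unfolding is_RKHS_def by blast

lemma inner_self_nonneg: "g \<in> H \<Longrightarrow> 0 \<le> ip g g"
  using is_RKHS unfolding is_RKHS_def by blast

lemma inner_self_eq_zero: "g \<in> H \<Longrightarrow> ip g g = 0 \<Longrightarrow> g = (\<lambda>_. 0)"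
  using is_RKHS unfolding is_RKHS_def by blast

lemma kernel_mem: "k x \<in> H"
  using is_RKHS unfolding is_RKHS_def by blast

lemma reproducing: "g \<in> H \<Longrightarrow> ip g (k x) = g x"
  using is_RKHS unfolding is_RKHS_def by blast

lemma Cauchy_converges:
  assumes "\<And>n. s n \<in> H"
    and "\<And>e. e > 0 \<Longrightarrow> \<exists>N. \<forall>m\<ge>N. \<forall>n\<ge>N. rkhs_norm ip (\<lambda>y. s m y - s n y) < e"
  shows "\<exists>g\<in>H. (\<lambda>n. rkhs_norm ip (\<lambda>y. s n y - g y)) \<longlonglongrightarrow> 0"
  using is_RKHS assms unfolding is_RKHS_def rkhs_norm_def by blast

lemma diff_mem: "g \<in> H \<Longrightarrow> h \<in> H \<Longrightarrow> (\<lambda>y. g y - h y) \<in> H"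
  using add_mem[OF _ scale_mem, of g h "-1"] by simp

lemma inner_diff_left:
  assumes "g \<in> H" "h \<in> H" "u \<in> H"
  shows "ip (\<lambda>y. g y - h y) u = ip g u - ip h u"
  using inner_add_left[OF assms(1) scale_mem[OF assms(2)] assms(3), of "-1"]
    inner_scale_left[OF assms(2,3), of "-1"] by simp

lemma inner_diff_right: "g \<in> H \<Longrightarrow> h \<in> H \<Longrightarrow> u \<in> H \<Longrightarrow> ip u (\<lambda>y. g y - h y) = ip u g - ip u h"
  by (simp add: inner_commute[of u] diff_mem inner_diff_left)

lemma inner_scale_right: "g \<in> H \<Longrightarrow> h \<in> H \<Longrightarrow> ip h (\<lambda>y. c * g y) = c * ip h g"
  by (simp add: inner_commute[of h] scale_mem inner_scale_left)

lemma sum_mem: "finite S \<Longrightarrow> (\<And>i. i \<in> S \<Longrightarrow> g i \<in> H) \<Longrightarrow> (\<lambda>y. \<Sum>i\<in>S. c i * g i y) \<in> H"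
proof (induction S rule: finite_induct)
  case empty
  then show ?case using zero_mem by simp
next
  case (insert j S)
  then have "(\<lambda>y. c j * g j y + (\<Sum>i\<in>S. c i * g i y)) \<in> H"
    by (intro add_mem scale_mem) auto
  with insert show ?case by simp
qed

lemma inner_sum_right:
  "finite S \<Longrightarrow> (\<And>i. i \<in> S \<Longrightarrow> g i \<in> H) \<Longrightarrow> u \<in> H \<Longrightarrow>
    ip u (\<lambda>y. \<Sum>i\<in>S. c i * g i y) = (\<Sum>i\<in>S. c i * ip u (g i))"
proof (induction S rule: finite_induct)
  case empty
  then show ?case using inner_scale_right[of u u 0] by simp
next
  case (insert j S)
  then have "ip u (\<lambda>y. c j * g j y + (\<Sum>i\<in>S. c i * g i y))
      = ip (\<lambda>y. c j * g j y + (\<Sum>i\<in>S. c i * g i y)) u"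
    by (intro inner_commute add_mem scale_mem sum_mem) auto
  also have "\<dots> = c j * ip u (g j) + (\<Sum>i\<in>S. c i * ip u (g i))"
    using insert by (simp add: inner_add_left inner_scale_left scale_mem sum_mem
        inner_commute[of _ u])
  finally show ?case using insert by simp
qed

lemma rkhs_norm_nonneg: "g \<in> H \<Longrightarrow> 0 \<le> rkhs_norm ip g"
  by (simp add: rkhs_norm_def inner_self_nonneg)

lemma Cauchy_Schwarz:
  assumes "g \<in> H" "h \<in> H"
  shows "\<bar>ip g h\<bar> \<le> rkhs_norm ip g * rkhs_norm ip h"
proof (cases "ip h h = 0")
  case True
  then have "h = (\<lambda>_. 0)" using inner_self_eq_zero assms by blast
  then show ?thesis
    using inner_scale_right[OF assms(1) assms(1), of 0] rkhs_norm_nonneg assms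
    by simp
next
  case False
  define t where "t = ip g h / ip h h"
  have hh: "ip h h > 0" using False inner_self_nonneg[OF assms(2)] by simp
  have "(\<lambda>y. g y - t * h y) \<in> H" using assms by (intro diff_mem scale_mem)
  then have "0 \<le> ip (\<lambda>y. g y - t * h y) (\<lambda>y. g y - t * h y)" by (rule inner_self_nonneg)
  also have "\<dots> = ip g g - 2 * t * ip g h + t\<^sup>2 * ip h h"
    using assms by (simp add: inner_diff_left inner_diff_right inner_scale_left
        inner_scale_right diff_mem scale_mem inner_commute[of h g] power2_eq_square algebra_simps)
  also have "\<dots> = ip g g - (ip g h)\<^sup>2 / ip h h"
    using hh by (simp add: t_def field_simps power2_eq_square)
  finally have "(ip g h)\<^sup>2 \<le> ip g g * ip h h" using hh by (simp add: field_simps)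
  then have "sqrt ((ip g h)\<^sup>2) \<le> sqrt (ip g g * ip h h)" by (rule real_sqrt_le_mono)
  then show ?thesis by (simp add: rkhs_norm_def real_sqrt_mult)
qed

lemma rkhs_norm_le_dual:
  assumes "d \<in> H" "0 \<le> e" "\<And>h. h \<in> H \<Longrightarrow> \<bar>ip h d\<bar> \<le> rkhs_norm ip h * e"
  shows "rkhs_norm ip d \<le> e"
proof -
  have "rkhs_norm ip d * rkhs_norm ip d \<le> rkhs_norm ip d * e"
    using assms(3)[OF assms(1)] inner_self_nonneg[OF assms(1)]
    by (simp add: rkhs_norm_def)
  then show ?thesis
    using assms rkhs_norm_nonneg[of d] by (cases "rkhs_norm ip d = 0") auto
qed

lemma kernel_commute: "k a b = k b a"
  using inner_commute[OF kernel_mem kernel_mem, of b a] by (simp add: reproducing kernel_mem)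

lemma abs_eval_le: "h \<in> H \<Longrightarrow> \<bar>h x\<bar> \<le> rkhs_norm ip h * rkhs_norm ip (k x)"
  using Cauchy_Schwarz[OF _ kernel_mem] by (simp add: reproducing)

lemma rkhs_norm_kernel_diff:
  "rkhs_norm ip (\<lambda>y. k a y - k b y) = sqrt (k a a - 2 * k a b + k b b)"
  by (simp add: rkhs_norm_def inner_diff_left inner_diff_right diff_mem kernel_mem
      reproducing kernel_commute[of b a])

lemma eval_diff_le:
  "h \<in> H \<Longrightarrow> \<bar>h a - h b\<bar> \<le> rkhs_norm ip h * rkhs_norm ip (\<lambda>y. k a y - k b y)"
  using Cauchy_Schwarz[OF _ diff_mem[OF kernel_mem kernel_mem]]
  by (simp add: inner_diff_right kernel_mem reproducing)

lemma kme_est_mem: "kme_est k f x w n \<in> H"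
  unfolding kme_est_def by (intro sum_mem kernel_mem) auto

lemma inner_kme_est: "h \<in> H \<Longrightarrow> ip h (kme_est k f x w n) = weighted_sum x w n (\<lambda>a. h (f a))"
  unfolding kme_est_def weighted_sum_def
  by (simp add: inner_sum_right[where g = "\<lambda>i. k (f (x i))"] kernel_mem reproducing)

lemma representer_of_approximations:
  assumes v_mem: "\<And>n. v n \<in> H"
    and v_approx: "\<And>n h. h \<in> H \<Longrightarrow> \<bar>ip h (v n) - T h\<bar> \<le> rkhs_norm ip h * e n"
    and e_nonneg: "\<And>n. 0 \<le> e n" and "e \<longlonglongrightarrow> 0"
  shows "\<exists>g\<in>H. \<forall>h\<in>H. ip h g = T h"
proof -
  have Cauchy: "rkhs_norm ip (\<lambda>y. v m y - v n y) \<le> e m + e n" for m n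
  proof (rule rkhs_norm_le_dual)
    show "(\<lambda>y. v m y - v n y) \<in> H"
      by (intro diff_mem v_mem)
    show "0 \<le> e m + e n"
      using e_nonneg[of m] e_nonneg[of n] by simp
    fix h
    assume "h \<in> H"
    then have "ip h (\<lambda>y. v m y - v n y) = (ip h (v m) - T h) - (ip h (v n) - T h)"
      by (simp add: inner_diff_right v_mem)
    then show "\<bar>ip h (\<lambda>y. v m y - v n y)\<bar> \<le> rkhs_norm ip h * (e m + e n)"
      using v_approx[OF \<open>h \<in> H\<close>, of m] v_approx[OF \<open>h \<in> H\<close>, of n]
      by (simp add: distrib_left)
  qed
  have Cauchy_seq: "\<exists>N. \<forall>m\<ge>N. \<forall>n\<ge>N. rkhs_norm ip (\<lambda>y. v m y - v n y) < \<epsilon>"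
    if "\<epsilon> > 0" for \<epsilon>
  proof -
    obtain N where N: "\<And>n. n \<ge> N \<Longrightarrow> \<bar>e n\<bar> < \<epsilon> / 2"
      using LIMSEQ_D[OF \<open>e \<longlonglongrightarrow> 0\<close>, of "\<epsilon> / 2"] \<open>\<epsilon> > 0\<close>
      by (metis real_norm_def diff_zero half_gt_zero)
    have "rkhs_norm ip (\<lambda>y. v m y - v n y) < \<epsilon>" if "m \<ge> N" "n \<ge> N" for m n
      using Cauchy[of m n] N[OF that(1)] N[OF that(2)] abs_ge_self[of "e m"] abs_ge_self[of "e n"]
      by linarith
    then show ?thesis by blast
  qed
  obtain g where "g \<in> H" and v_lim: "(\<lambda>n. rkhs_norm ip (\<lambda>y. v n y - g y)) \<longlonglongrightarrow> 0"
    using Cauchy_converges[OF v_mem Cauchy_seq] by blast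
  have "ip h g = T h" if "h \<in> H" for h
  proof -
    have "\<bar>ip h g - T h\<bar> \<le> rkhs_norm ip h * e n + rkhs_norm ip h * rkhs_norm ip (\<lambda>y. v n y - g y)"
      for n
    proof -
      have "ip h g - T h = (ip h (v n) - T h) - ip h (\<lambda>y. v n y - g y)"
        using that \<open>g \<in> H\<close> by (simp add: inner_diff_right v_mem)
      then show ?thesis
        using v_approx[OF that, of n] Cauchy_Schwarz[OF that diff_mem[OF v_mem[of n] \<open>g \<in> H\<close>]]
        by linarith
    qed
    moreover have "(\<lambda>n. rkhs_norm ip h * e n + rkhs_norm ip h * rkhs_norm ip (\<lambda>y. v n y - g y))
        \<longlonglongrightarrow> rkhs_norm ip h * 0 + rkhs_norm ip h * 0"
      using \<open>e \<longlonglongrightarrow> 0\<close> v_lim by (intro tendsto_intros)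
    ultimately have "\<bar>ip h g - T h\<bar> \<le> 0"
      by (intro LIMSEQ_le_const) auto
    then show ?thesis by simp
  qed
  with \<open>g \<in> H\<close> show ?thesis by blast
qed

lemma representer_if_approximable:
  assumes "\<And>e. e > 0 \<Longrightarrow> \<exists>v\<in>H. \<forall>h\<in>H. \<bar>ip h v - T h\<bar> \<le> rkhs_norm ip h * e"
  shows "\<exists>g\<in>H. \<forall>h\<in>H. ip h g = T h"
proof -
  have "\<exists>v. v \<in> H \<and> (\<forall>h\<in>H. \<bar>ip h v - T h\<bar> \<le> rkhs_norm ip h * inverse (real (Suc n)))" for n
    using assms[of "inverse (real (Suc n))"] by auto
  then obtain v where "\<And>n. v n \<in> H"
    and "\<And>n h. h \<in> H \<Longrightarrow> \<bar>ip h (v n) - T h\<bar> \<le> rkhs_norm ip h * inverse (real (Suc n))"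
    by metis
  then show ?thesis
    by (intro representer_of_approximations[OF _ _ _ LIMSEQ_inverse_real_of_nat]) auto
qed

end

locale kernel_pushforward = rkhs k H ip
  for k :: "'b::topological_space \<Rightarrow> 'b \<Rightarrow> real" and H ip +
  fixes f :: "'a::t2_space \<Rightarrow> 'b"
  assumes kernel_continuous: "continuous_on UNIV (\<lambda>(a, b). k a b)"
    and f_continuous: "continuous_on UNIV f"
    and domain_compact: "compact (UNIV :: 'a set)"
begin

definition feature_dist :: "'a \<Rightarrow> 'a \<Rightarrow> real" where
  "feature_dist c a = rkhs_norm ip (\<lambda>y. k (f a) y - k (f c) y)"

lemma feature_dist_self: "feature_dist c c = 0"
  unfolding feature_dist_def rkhs_norm_kernel_diff by simp

lemma continuous_feature_dist: "continuous_on UNIV (feature_dist c)"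
proof -
  have k_comp: "continuous_on UNIV (\<lambda>a. k (u a) (v a))"
    if "continuous_on UNIV u" "continuous_on UNIV v" for u v :: "'a \<Rightarrow> 'b"
    using continuous_on_compose2[OF kernel_continuous continuous_on_Pair[OF that]] by simp
  show ?thesis
    unfolding feature_dist_def[abs_def] rkhs_norm_kernel_diff
    by (intro continuous_on_real_sqrt continuous_on_add continuous_on_diff continuous_on_mult
        continuous_on_const k_comp f_continuous)
qed

lemma eval_comp_diff_le: "h \<in> H \<Longrightarrow> \<bar>h (f a) - h (f c)\<bar> \<le> rkhs_norm ip h * feature_dist c a"
  unfolding feature_dist_def by (rule eval_diff_le)

lemma continuous_on_comp_mem:
  assumes "h \<in> H"
  shows "continuous_on UNIV (\<lambda>a. h (f a))"
proof (intro continuous_at_imp_continuous_on ballI)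
  fix c
  have "(feature_dist c \<longlongrightarrow> 0) (at c)"
    using continuous_feature_dist feature_dist_self
    by (metis continuous_on_eq_continuous_at isCont_def open_UNIV UNIV_I)
  then have "((\<lambda>a. rkhs_norm ip h * feature_dist c a) \<longlongrightarrow> 0) (at c)"
    by (simp add: tendsto_mult_right_zero)
  then have "((\<lambda>a. h (f a) - h (f c)) \<longlongrightarrow> 0) (at c)"
    by (rule Lim_null_comparison[rotated]) (use eval_comp_diff_le[OF assms] in auto)
  then show "isCont (\<lambda>a. h (f a)) c"
    unfolding isCont_def by (rule LIM_zero_cancel)
qed

lemma partition_of_unity_feature_dist_exists: "\<delta> > 0 \<Longrightarrow> \<exists>A \<phi>. partition_of_unity feature_dist \<delta> A \<phi>"
  by (rule partition_of_unity_exists[OF domain_compact continuous_feature_dist feature_dist_self])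

lemma functional_comp_approx:
  assumes "bounded_linear_on_C L M" "partition_of_unity feature_dist \<delta> A \<phi>" "h \<in> H"
  shows "\<bar>L (\<lambda>a. h (f a)) - (\<Sum>c\<in>A. h (f c) * L (\<phi> c))\<bar> \<le> M * (rkhs_norm ip h * \<delta>)"
  using assms eval_comp_diff_le[OF assms(3)]
  by (intro bounded_linear_on_C_partition_approx continuous_on_comp_mem rkhs_norm_nonneg)

lemma
  assumes "prob_space P" "sets P = sets borel"
  shows kme_mem: "kme k f P \<in> H"
    and inner_kme: "h \<in> H \<Longrightarrow> ip h (kme k f P) = (\<integral>a. h (f a) \<partial>P)"
proof -
  have integral: "bounded_linear_on_C (\<lambda>g. \<integral>a. g a \<partial>P) 1"
    by (rule bounded_linear_on_C_integral[OF domain_compact assms])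
  have approx: "\<exists>v\<in>H. \<forall>h\<in>H. \<bar>ip h v - (\<integral>a. h (f a) \<partial>P)\<bar> \<le> rkhs_norm ip h * e" if e_pos: "e > 0" for e
  proof -
    obtain A \<phi> where pou: "partition_of_unity feature_dist e A \<phi>"
      using partition_of_unity_feature_dist_exists[OF e_pos] by blast
    then have "finite A"
      by (simp add: partition_of_unity_def)
    \<comment> \<open>a Riemann sum for the \<open>H\<close>-valued integral of \<open>k (f a)\<close>\<close>
    define v where "v y = (\<Sum>c\<in>A. (\<integral>a. \<phi> c a \<partial>P) * k (f c) y)" for y
    have "v \<in> H"
      unfolding v_def using \<open>finite A\<close> by (intro sum_mem kernel_mem)
    moreover have "ip h v = (\<Sum>c\<in>A. h (f c) * (\<integral>a. \<phi> c a \<partial>P))" if "h \<in> H" for h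
      unfolding v_def using \<open>finite A\<close> that
      by (simp add: inner_sum_right[where g = "\<lambda>c. k (f c)"] kernel_mem reproducing mult.commute)
    ultimately show ?thesis
      using functional_comp_approx[OF integral pou] by (metis mult_1 abs_minus_commute)
  qed
  then obtain g where "g \<in> H" and g: "\<And>h. h \<in> H \<Longrightarrow> ip h g = (\<integral>a. h (f a) \<partial>P)"
    using representer_if_approximable[OF approx] by blast
  have "g = kme k f P"
  proof
    fix y
    have "g y = ip (k y) g"
      using \<open>g \<in> H\<close> by (simp add: inner_commute kernel_mem reproducing)
    also have "\<dots> = kme k f P y"
      by (simp add: g kernel_mem kme_def kernel_commute[of y])
    finally show "g y = kme k f P y" .
  qed
  with \<open>g \<in> H\<close> g show "kme k f P \<in> H" "h \<in> H \<Longrightarrow> ip h (kme k f P) = (\<integral>a. h (f a) \<partial>P)"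
    by auto
qed

lemma weighted_sum_tendsto_integral_rkhs:
  assumes "prob_space P" "sets P = sets borel"
    and "(\<lambda>n. rkhs_norm ip (\<lambda>z. kme_est k f (x n) (w n) n z - kme k f P z)) \<longlonglongrightarrow> 0"
    and "h \<in> H"
  shows "(\<lambda>n. weighted_sum (x n) (w n) n (\<lambda>a. h (f a)) - (\<integral>a. h (f a) \<partial>P)) \<longlonglongrightarrow> 0"
proof (rule Lim_null_comparison)
  show "(\<lambda>n. rkhs_norm ip h * rkhs_norm ip (\<lambda>z. kme_est k f (x n) (w n) n z - kme k f P z)) \<longlonglongrightarrow> 0"
    using assms(3) by (rule tendsto_mult_right_zero)
  have "weighted_sum (x n) (w n) n (\<lambda>a. h (f a)) - (\<integral>a. h (f a) \<partial>P)
      = ip h (\<lambda>z. kme_est k f (x n) (w n) n z - kme k f P z)" for n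
    using assms by (simp add: inner_diff_right kme_est_mem kme_mem inner_kme_est inner_kme)
  then show "\<forall>\<^sub>F n in sequentially. norm (weighted_sum (x n) (w n) n (\<lambda>a. h (f a)) - (\<integral>a. h (f a) \<partial>P))
      \<le> rkhs_norm ip h * rkhs_norm ip (\<lambda>z. kme_est k f (x n) (w n) n z - kme k f P z)"
    using assms by (simp add: Cauchy_Schwarz diff_mem kme_est_mem kme_mem)
qed

lemma rkhs_norm_representer_le:
  assumes L: "bounded_linear_on_C L M" and "0 \<le> M"
    and pou: "partition_of_unity feature_dist \<delta> A \<phi>" and "0 \<le> \<delta>"
    and "E \<in> H" and inner_E: "\<And>h. h \<in> H \<Longrightarrow> ip h E = L (\<lambda>a. h (f a))"
  shows "rkhs_norm ip E \<le> M * \<delta> + (\<Sum>c\<in>A. \<bar>L (\<phi> c)\<bar> * rkhs_norm ip (k (f c)))"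
    (is "_ \<le> _ + ?b")
proof (rule rkhs_norm_le_dual[OF \<open>E \<in> H\<close>])
  have "0 \<le> ?b"
    by (intro sum_nonneg mult_nonneg_nonneg abs_ge_zero rkhs_norm_nonneg kernel_mem)
  with assms(2,4) show "0 \<le> M * \<delta> + ?b"
    by simp
  fix h
  assume h: "h \<in> H"
  have "\<bar>h (f c) * L (\<phi> c)\<bar> \<le> rkhs_norm ip h * (\<bar>L (\<phi> c)\<bar> * rkhs_norm ip (k (f c)))" for c
    using mult_right_mono[OF abs_eval_le[OF h, of "f c"] abs_ge_zero[of "L (\<phi> c)"]]
    by (simp add: abs_mult mult_ac)
  then have "\<bar>\<Sum>c\<in>A. h (f c) * L (\<phi> c)\<bar> \<le> rkhs_norm ip h * ?b"
    unfolding sum_distrib_left by (intro order_trans[OF sum_abs sum_mono])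
  moreover have "\<bar>L (\<lambda>a. h (f a)) - (\<Sum>c\<in>A. h (f c) * L (\<phi> c))\<bar> \<le> M * (rkhs_norm ip h * \<delta>)"
    by (rule functional_comp_approx[OF L pou h])
  ultimately show "\<bar>ip h E\<bar> \<le> rkhs_norm ip h * (M * \<delta> + ?b)"
    unfolding inner_E[OF h] by (simp add: algebra_simps)
qed

lemma kme_est_tendsto:
  assumes "prob_space P" "sets P = sets borel"
    and w_bound: "\<And>n. (\<Sum>i=1..n. \<bar>w n i\<bar>) \<le> C"
    and weak: "\<And>g. continuous_on UNIV g \<Longrightarrow>
      (\<lambda>n. weighted_sum (x n) (w n) n g - (\<integral>a. g a \<partial>P)) \<longlonglongrightarrow> 0"
  shows "(\<lambda>n. rkhs_norm ip (\<lambda>z. kme_est k f (x n) (w n) n z - kme k f P z)) \<longlonglongrightarrow> 0"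
proof (rule tendsto_zero_if_approximable[where K = "C + 1"])
  define L where "L n g = weighted_sum (x n) (w n) n g - (\<integral>a. g a \<partial>P)" for n g
  define E where "E n = (\<lambda>z. kme_est k f (x n) (w n) n z - kme k f P z)" for n
  have L: "bounded_linear_on_C (L n) (C + 1)" for n
    unfolding L_def
    by (intro bounded_linear_on_C_minus bounded_linear_on_C_weighted_sum
        bounded_linear_on_C_integral w_bound domain_compact assms(1,2))
  have "0 \<le> C"
    using w_bound[of 0] by simp
  have E_mem: "E n \<in> H" for n
    unfolding E_def by (intro diff_mem kme_est_mem kme_mem assms(1,2))
  have inner_E: "ip h (E n) = L n (\<lambda>a. h (f a))" if "h \<in> H" for h n
    unfolding E_def L_def using assms(1,2) that
    by (simp add: inner_diff_right kme_est_mem kme_mem inner_kme_est inner_kme)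
  fix e :: real
  assume "e > 0"
  then obtain A \<phi> where pou: "partition_of_unity feature_dist e A \<phi>"
    using partition_of_unity_feature_dist_exists by blast
  then have \<phi>_cont: "\<And>c. c \<in> A \<Longrightarrow> continuous_on UNIV (\<phi> c)"
    by (simp add: partition_of_unity_def)
  define b where "b n = (\<Sum>c\<in>A. \<bar>L n (\<phi> c)\<bar> * rkhs_norm ip (k (f c)))" for n
  have norm_E: "rkhs_norm ip (E n) \<le> (C + 1) * e + b n" for n
    unfolding b_def using \<open>0 \<le> C\<close> \<open>e > 0\<close>
    by (intro rkhs_norm_representer_le[OF L _ pou _ E_mem inner_E]) auto
  have "b \<longlonglongrightarrow> 0"
    unfolding b_def L_def
    by (intro tendsto_null_sum tendsto_mult_left_zero tendsto_rabs_zero weak \<phi>_cont)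
  moreover have "\<bar>rkhs_norm ip (E n)\<bar> \<le> \<bar>b n\<bar> + (C + 1) * e" for n
    using norm_E[of n] abs_of_nonneg[OF rkhs_norm_nonneg[OF E_mem, of n]] abs_ge_self[of "b n"]
    by linarith
  ultimately show "\<exists>b. b \<longlonglongrightarrow> 0 \<and> (\<forall>n. \<bar>rkhs_norm ip (\<lambda>z. kme_est k f (x n) (w n) n z
      - kme k f P z)\<bar> \<le> \<bar>b n\<bar> + (C + 1) * e)"
    unfolding E_def by blast
qed

end

theorem theorem1:
  fixes f :: "'a::t2_space \<Rightarrow> 'b::t2_space"
    and kx :: "'a \<Rightarrow> 'a \<Rightarrow> real" and kz :: "'b \<Rightarrow> 'b \<Rightarrow> real"
    and Hx :: "('a \<Rightarrow> real) set" and ipx :: "('a \<Rightarrow> real) \<Rightarrow> ('a \<Rightarrow> real) \<Rightarrow> real"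
    and Hz :: "('b \<Rightarrow> real) set" and ipz :: "('b \<Rightarrow> real) \<Rightarrow> ('b \<Rightarrow> real) \<Rightarrow> real"
    and P :: "'a measure"
    and x :: "nat \<Rightarrow> nat \<Rightarrow> 'a" and w :: "nat \<Rightarrow> nat \<Rightarrow> real" and C :: real
  assumes "compact (UNIV :: 'a set)" and "compact (UNIV :: 'b set)"
    and "continuous_on UNIV f"
    and "pos_def_kernel kx" and "continuous_on UNIV (\<lambda>(a, b). kx a b)"
    and "pos_def_kernel kz" and "continuous_on UNIV (\<lambda>(a, b). kz a b)"
    and "is_RKHS kx Hx ipx" and "is_RKHS kz Hz ipz"
    and "c0_universal Hx"
    and "prob_space P" and "sets P = sets borel"
    and "\<forall>n. (\<Sum>i=1..n. \<bar>w n i\<bar>) \<le> C"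
    and "(\<lambda>n. rkhs_norm ipx (\<lambda>y. kme_est kx id (x n) (w n) n y - kme kx id P y)) \<longlonglongrightarrow> 0"
  shows "(\<lambda>n. rkhs_norm ipz (\<lambda>z. kme_est kz f (x n) (w n) n z - kme kz f P z)) \<longlonglongrightarrow> 0"
proof -
  interpret X: kernel_pushforward kx Hx ipx id
    using assms by unfold_locales (auto intro: continuous_on_id)
  interpret Z: kernel_pushforward kz Hz ipz f
    using assms by unfold_locales auto
  have Hx_continuous: "Hx \<subseteq> {h. continuous_on UNIV h}"
    and Hx_dense: "\<And>g e. continuous_on UNIV g \<Longrightarrow> e > 0 \<Longrightarrow> \<exists>h\<in>Hx. \<forall>a. \<bar>g a - h a\<bar> < e"
    using assms(10) unfolding c0_universal_def C0_functions_compact[OF assms(1)] by blast+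
  have "(\<lambda>n. weighted_sum (x n) (w n) n g - (\<integral>a. g a \<partial>P)) \<longlonglongrightarrow> 0"
    if "continuous_on UNIV g" for g
  proof (rule weighted_sum_tendsto_integral_dense[where S = Hx, OF assms(1,11,12) _ _ _ _ that])
    show "(\<lambda>n. weighted_sum (x n) (w n) n h - (\<integral>a. h a \<partial>P)) \<longlonglongrightarrow> 0" if "h \<in> Hx" for h
      using X.weighted_sum_tendsto_integral_rkhs[OF assms(11,12,14) that] by simp
  qed (use assms(13) Hx_continuous Hx_dense[OF that] in auto)
  with assms(13) show ?thesis
    by (intro Z.kme_est_tendsto[OF assms(11,12)]) auto
qed

end
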